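(* Let $\mathcal{L}=(L,\wedge,\vee,0,1)$ be a complete lattice and let $p\in L$ with $\Omega(p)\neq\emptyset$. The following are equivalent: (a) $p$ is strongly irreducible in $L$; (a') $L\setminus[0,p]$ is closed under $\wedge$; (b) $\Omega(p)$ is closed under $\wedge$, and for every $a\in L\setminus[0,p]$ there exists $y\in\Omega(p)$ with $y\leq a$; (c) $p$ is a pseudo-complement of some element $q$ of $L$ such that $[0,q]$ is uniform; (d) for every $q\in\Omega(p)$, $p$ is a pseudo-complement of $q$ in $L$ and $[0,q]$ is uniform; (e) $p$ is irreducible and weakly $\wedge$-distributive in $L$.
   Context: An element $p$ of a lower semilattice is irreducible if for all $a,b$ with $p\leq a,b$: $a\wedge b\leq p$ implies $a\leq p$ or $b\leq p$; strongly irreducible if this holds for all $a,b$. $[a,b]=\{x\mid a\leq x\leq b\}$. For $p\in L$, $\Omega(p)=\{x\in L\setminus\{0\}\mid p\wedge x=0\}$. A lower semilattice with least element $0$ is uniform if $x\wedge y=0$ implies $x=0$ or $y=0$. A pseudo-complement of $a$ in $L$ is the greatest $x\in L$ with $a\wedge x=0$. An element $p$ is weakly $\wedge$-distributive if whenever $x\wedge y=0$ one has $p=(x\vee p)\wedge(y\vee p)$. *)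

theory Defs
  imports Main
begin

definition irreducible_el :: "'a::lattice \<Rightarrow> bool" where
  "irreducible_el p \<longleftrightarrow>
     (\<forall>a b. p \<le> a \<longrightarrow> p \<le> b \<longrightarrow> inf a b \<le> p \<longrightarrow> a \<le> p \<or> b \<le> p)"

definition strongly_irreducible :: "'a::lattice \<Rightarrow> bool" where
  "strongly_irreducible p \<longleftrightarrow> (\<forall>a b. inf a b \<le> p \<longrightarrow> a \<le> p \<or> b \<le> p)"

definition interval :: "'a::order \<Rightarrow> 'a \<Rightarrow> 'a set" where
  "interval a b = {x. a \<le> x \<and> x \<le> b}"

definition Omega :: "'a::bounded_lattice \<Rightarrow> 'a set" where
  "Omega p = {x. x \<noteq> bot \<and> inf p x = bot}"

definition meet_closed :: "'a::lattice set \<Rightarrow> bool" where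
  "meet_closed S \<longleftrightarrow> (\<forall>x\<in>S. \<forall>y\<in>S. inf x y \<in> S)"

definition uniform_on :: "'a::bounded_lattice set \<Rightarrow> bool" where
  "uniform_on S \<longleftrightarrow> (\<forall>x\<in>S. \<forall>y\<in>S. inf x y = bot \<longrightarrow> x = bot \<or> y = bot)"

definition pseudo_complement_of :: "'a::bounded_lattice \<Rightarrow> 'a \<Rightarrow> bool" where
  "pseudo_complement_of p a \<longleftrightarrow> inf a p = bot \<and> (\<forall>x. inf a x = bot \<longrightarrow> x \<le> p)"

definition weakly_meet_distributive :: "'a::bounded_lattice \<Rightarrow> bool" where
  "weakly_meet_distributive p \<longleftrightarrow>
     (\<forall>x y. inf x y = bot \<longrightarrow> p = inf (sup x p) (sup y p))"

end

theory Submission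
  imports Defs
begin

text \<open>Everything hinges on the property that p lies above one of any two disjoint elements.
  Strong irreducibility gives it directly, and so does irreducibility together with weak
  meet-distributivity, applied to x \<squnion> p and y \<squnion> p. Conversely, given it and any q \<in> \<Omega>(p),
  p is the pseudo-complement of q and [0,q] is uniform; and if a \<sqinter> b \<le> p then a \<sqinter> q and b \<sqinter> q
  are disjoint elements of [0,q], so one of them is 0, which puts a or b below the
  pseudo-complement p. The characterisation via \<Omega>(p) uses the same witnesses a \<sqinter> q.\<close>

definition prime_on_disjoint :: "'a::bounded_lattice \<Rightarrow> bool" where
  "prime_on_disjoint p \<longleftrightarrow> (\<forall>x y. inf x y = bot \<longrightarrow> x \<le> p \<or> y \<le> p)"

lemma Omega_not_le:
  fixes p q :: "'a::bounded_lattice"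
  assumes "q \<in> Omega p"
  shows "\<not> q \<le> p"
  using assms unfolding Omega_def by (auto simp: inf.absorb2)

lemma inf_eq_bot_antimono:
  fixes p x y :: "'a::bounded_lattice"
  assumes "inf p x = bot" "y \<le> x"
  shows "inf p y = bot"
  using inf_mono[OF order_refl assms(2), of p] assms(1) by (simp add: bot_unique)

lemma inf_eq_bot_if_le_disjoint:
  fixes x p q :: "'a::bounded_lattice"
  assumes "inf x q \<le> p" "inf p q = bot"
  shows "inf x q = bot"
proof -
  have "inf x q \<le> inf p q" using assms(1) inf_le2 by (rule le_infI)
  then show ?thesis using assms(2) by (simp add: bot_unique)
qed

lemma pseudo_complement_ofD:
  fixes p q x :: "'a::bounded_lattice"
  assumes "pseudo_complement_of p q" "inf x q = bot"
  shows "x \<le> p"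
  using assms unfolding pseudo_complement_of_def by (simp add: inf_commute)

lemma strongly_irreducible_iff_meet_closed_compl:
  fixes p :: "'a::bounded_lattice"
  shows "strongly_irreducible p \<longleftrightarrow> meet_closed (UNIV - interval bot p)"
  unfolding strongly_irreducible_def meet_closed_def interval_def by auto

lemma strongly_irreducible_imp_prime_on_disjoint:
  "strongly_irreducible p \<Longrightarrow> prime_on_disjoint p"
  unfolding strongly_irreducible_def prime_on_disjoint_def by simp

lemma strongly_irreducible_imp_irreducible_el:
  "strongly_irreducible p \<Longrightarrow> irreducible_el p"
  unfolding strongly_irreducible_def irreducible_el_def by blast

lemma irreducible_el_imp_weakly_meet_distributive_iff:
  fixes p :: "'a::bounded_lattice"
  assumes "irreducible_el p"
  shows "weakly_meet_distributive p \<longleftrightarrow> prime_on_disjoint p"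
proof
  assume wmd: "weakly_meet_distributive p"
  show "prime_on_disjoint p"
    unfolding prime_on_disjoint_def
  proof (intro allI impI)
    fix x y :: 'a
    assume "inf x y = bot"
    then have "inf (sup x p) (sup y p) \<le> p"
      using wmd unfolding weakly_meet_distributive_def by (metis order_refl)
    moreover have "p \<le> sup x p" "p \<le> sup y p" by simp_all
    ultimately have "sup x p \<le> p \<or> sup y p \<le> p"
      using assms unfolding irreducible_el_def by blast
    then show "x \<le> p \<or> y \<le> p" by simp
  qed
next
  assume prime: "prime_on_disjoint p"
  show "weakly_meet_distributive p"
    unfolding weakly_meet_distributive_def
  proof (intro allI impI)
    fix x y :: 'a
    assume "inf x y = bot"
    then have "x \<le> p \<or> y \<le> p"
      using prime unfolding prime_on_disjoint_def by blast
    then have "sup x p = p \<or> sup y p = p" by (auto simp: sup.absorb2)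
    then show "p = inf (sup x p) (sup y p)" by (auto simp: inf.absorb1 inf.absorb2)
  qed
qed

lemma prime_on_disjoint_imp_pseudo_complement:
  fixes p q :: "'a::bounded_lattice"
  assumes "prime_on_disjoint p" "q \<in> Omega p"
  shows "pseudo_complement_of p q"
  using assms Omega_not_le[OF assms(2)]
  unfolding prime_on_disjoint_def pseudo_complement_of_def Omega_def
  by (auto simp: inf_commute)

lemma prime_on_disjoint_imp_uniform_interval:
  fixes p q :: "'a::bounded_lattice"
  assumes "prime_on_disjoint p" "inf p q = bot"
  shows "uniform_on (interval bot q)"
  unfolding uniform_on_def interval_def
proof (intro ballI impI)
  fix x y assume "x \<in> {x. bot \<le> x \<and> x \<le> q}" "y \<in> {x. bot \<le> x \<and> x \<le> q}" "inf x y = bot"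
  then have "inf x q = x" "inf y q = y" "inf x q \<le> p \<or> inf y q \<le> p"
    using assms(1) unfolding prime_on_disjoint_def by (auto simp: inf.absorb1)
  then show "x = bot \<or> y = bot"
    using inf_eq_bot_if_le_disjoint[OF _ assms(2)] by metis
qed

lemma strongly_irreducible_if_pseudo_complement_uniform:
  fixes p q :: "'a::bounded_lattice"
  assumes pc: "pseudo_complement_of p q" and u: "uniform_on (interval bot q)"
  shows "strongly_irreducible p"
  unfolding strongly_irreducible_def
proof (intro allI impI)
  fix a b assume "inf a b \<le> p"
  moreover have "inf p q = bot"
    using pc unfolding pseudo_complement_of_def by (simp add: inf_commute)
  ultimately have "inf (inf a b) q = bot" by (rule inf_eq_bot_if_le_disjoint[OF le_infI1])
  then have "inf (inf a q) (inf b q) = bot" by (simp add: inf_aci)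
  then have "inf a q = bot \<or> inf b q = bot"
    using u unfolding uniform_on_def interval_def by auto
  then show "a \<le> p \<or> b \<le> p"
    using pseudo_complement_ofD[OF pc] by blast
qed

lemma strongly_irreducible_imp_meet_closed_Omega:
  fixes p :: "'a::bounded_lattice"
  assumes "strongly_irreducible p"
  shows "meet_closed (Omega p)"
  unfolding meet_closed_def
proof (intro ballI)
  fix x y assume x: "x \<in> Omega p" and y: "y \<in> Omega p"
  then have "\<not> inf x y \<le> p"
    using assms Omega_not_le unfolding strongly_irreducible_def by blast
  moreover have "inf p (inf x y) = bot"
    using x inf_eq_bot_antimono inf_le1 unfolding Omega_def by blast
  ultimately show "inf x y \<in> Omega p" unfolding Omega_def by auto
qed

lemma strongly_irreducible_imp_inf_in_Omega:
  fixes p q a :: "'a::bounded_lattice"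
  assumes "strongly_irreducible p" "q \<in> Omega p" "\<not> a \<le> p"
  shows "inf a q \<in> Omega p"
proof -
  have "\<not> inf a q \<le> p"
    using assms Omega_not_le unfolding strongly_irreducible_def by blast
  moreover have "inf p (inf a q) = bot"
    using assms(2) inf_eq_bot_antimono inf_le2 unfolding Omega_def by blast
  ultimately show ?thesis unfolding Omega_def by auto
qed

lemma strongly_irreducible_imp_Omega_below:
  fixes p :: "'a::bounded_lattice"
  assumes "strongly_irreducible p" "Omega p \<noteq> {}"
  shows "\<forall>a \<in> UNIV - interval bot p. \<exists>y\<in>Omega p. y \<le> a"
proof
  fix a assume "a \<in> UNIV - interval bot p"
  then have "\<not> a \<le> p" unfolding interval_def by simp
  moreover obtain q where "q \<in> Omega p" using assms(2) by blast
  ultimately have "inf a q \<in> Omega p"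
    using assms(1) strongly_irreducible_imp_inf_in_Omega by blast
  then show "\<exists>y\<in>Omega p. y \<le> a" using inf_le1 by blast
qed

lemma strongly_irreducible_if_Omega_meet_closed_below:
  fixes p :: "'a::bounded_lattice"
  assumes closed: "meet_closed (Omega p)"
    and below: "\<forall>a \<in> UNIV - interval bot p. \<exists>y\<in>Omega p. y \<le> a"
  shows "strongly_irreducible p"
  unfolding strongly_irreducible_def
proof (intro allI impI, rule ccontr)
  fix a b assume ab: "inf a b \<le> p" and "\<not> (a \<le> p \<or> b \<le> p)"
  then have "a \<in> UNIV - interval bot p" "b \<in> UNIV - interval bot p"
    unfolding interval_def by auto
  then obtain y z where y: "y \<in> Omega p" "y \<le> a" and z: "z \<in> Omega p" "z \<le> b"
    using below by meson
  have "inf y z \<in> Omega p"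
    using closed y z unfolding meet_closed_def by blast
  moreover have "inf y z \<le> p"
    using inf_mono[OF y(2) z(2)] ab by (rule order_trans)
  ultimately show False using Omega_not_le by blast
qed

theorem lemma1p15:
  fixes p :: "'a::complete_lattice"
  assumes "Omega p \<noteq> {}"
  shows "(strongly_irreducible p \<longleftrightarrow> meet_closed (UNIV - interval bot p))
       \<and> (strongly_irreducible p \<longleftrightarrow>
            (meet_closed (Omega p) \<and> (\<forall>a \<in> UNIV - interval bot p. \<exists>y\<in>Omega p. y \<le> a)))
       \<and> (strongly_irreducible p \<longleftrightarrow>
            (\<exists>q. pseudo_complement_of p q \<and> uniform_on (interval bot q)))
       \<and> (strongly_irreducible p \<longleftrightarrow>
            (\<forall>q\<in>Omega p. pseudo_complement_of p q \<and> uniform_on (interval bot q)))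
       \<and> (strongly_irreducible p \<longleftrightarrow> irreducible_el p \<and> weakly_meet_distributive p)"
proof -
  obtain q where q: "q \<in> Omega p" using assms by blast
  have prime_imp_d: "\<forall>r\<in>Omega p. pseudo_complement_of p r \<and> uniform_on (interval bot r)"
    if "prime_on_disjoint p"
    using that prime_on_disjoint_imp_pseudo_complement prime_on_disjoint_imp_uniform_interval
    unfolding Omega_def by blast
  have d_imp_a: "strongly_irreducible p"
    if "\<forall>r\<in>Omega p. pseudo_complement_of p r \<and> uniform_on (interval bot r)"
    using that q strongly_irreducible_if_pseudo_complement_uniform by blast
  have a_imp_d: "\<forall>r\<in>Omega p. pseudo_complement_of p r \<and> uniform_on (interval bot r)"
    if "strongly_irreducible p"
    using prime_imp_d strongly_irreducible_imp_prime_on_disjoint[OF that] .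
  show ?thesis
  proof (intro conjI)
    show "strongly_irreducible p \<longleftrightarrow> meet_closed (UNIV - interval bot p)"
      by (rule strongly_irreducible_iff_meet_closed_compl)
    show "strongly_irreducible p \<longleftrightarrow>
        (meet_closed (Omega p) \<and> (\<forall>a \<in> UNIV - interval bot p. \<exists>y\<in>Omega p. y \<le> a))"
      using strongly_irreducible_imp_meet_closed_Omega strongly_irreducible_imp_Omega_below[OF _ assms]
        strongly_irreducible_if_Omega_meet_closed_below by blast
    show "strongly_irreducible p \<longleftrightarrow>
        (\<exists>r. pseudo_complement_of p r \<and> uniform_on (interval bot r))"
      using a_imp_d q strongly_irreducible_if_pseudo_complement_uniform by blast
    show "strongly_irreducible p \<longleftrightarrow>
        (\<forall>r\<in>Omega p. pseudo_complement_of p r \<and> uniform_on (interval bot r))"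
      using a_imp_d d_imp_a by blast
    show "strongly_irreducible p \<longleftrightarrow> irreducible_el p \<and> weakly_meet_distributive p"
      using strongly_irreducible_imp_irreducible_el strongly_irreducible_imp_prime_on_disjoint
        irreducible_el_imp_weakly_meet_distributive_iff prime_imp_d d_imp_a by blast
  qed
qed

end
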